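(* Let $\sigma_1,\sigma_2$ be convex polytopes in a Euclidean vector space $\mathbb{E}$, let $\sigma$ be the convex hull of some of the vertices of $\sigma_1\times\sigma_2\subseteq\mathbb{E}\times\mathbb{E}$, and let $\pi\colon\mathbb{E}\times\mathbb{E}\to\mathbb{E}$, $\pi(x,y)=x-y$. If $D_1$ is sufficiently rich for $\sigma_1$ and $D_2$ is sufficiently rich for $\sigma_2$, then $(D_1+D_2)\cup D_1\cup D_2$ is sufficiently rich for $\pi(\sigma)$; in particular it is sufficiently rich for $\sigma_1-\sigma_2$.
   Context: A finite set $D$ is sufficiently rich for a polytope $\tau$ if $w-v\in D$ for any two distinct vertices $v,w$ of $\tau$. $D_1+D_2$ and $\sigma_1-\sigma_2$ denote Minkowski sum and difference. *)

theory Defs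
  imports "HOL-Analysis.Analysis"
begin

definition vertices :: "'a::real_vector set \<Rightarrow> 'a set" where
  "vertices \<tau> = {v. v extreme_point_of \<tau>}"

definition sufficiently_rich :: "'a::real_vector set \<Rightarrow> 'a set \<Rightarrow> bool" where
  "sufficiently_rich D \<tau> \<longleftrightarrow> finite D \<and>
     (\<forall>v\<in>vertices \<tau>. \<forall>w\<in>vertices \<tau>. v \<noteq> w \<longrightarrow> w - v \<in> D)"

definition minkowski_sum :: "'a::real_vector set \<Rightarrow> 'a set \<Rightarrow> 'a set" where
  "minkowski_sum A B = {a + b | a b. a \<in> A \<and> b \<in> B}"

definition minkowski_diff :: "'a::real_vector set \<Rightarrow> 'a set \<Rightarrow> 'a set" where
  "minkowski_diff A B = {a - b | a b. a \<in> A \<and> b \<in> B}"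

end

theory Submission
  imports Defs
begin

text \<open>
  Let \<pi>(x, y) = x - y.  Since \<pi> is linear, \<pi>(conv V) = conv(\<pi> V),
  and every extreme point of a convex hull lies in the generating set; so every
  vertex of \<pi>(\<sigma>) has the form v1 - v2 with (v1, v2) \<in> V.  An extreme point of a
  product S \<times> T has extreme components, so v1 is a vertex of \<sigma>1 and v2 one of \<sigma>2.
  For two distinct such vertices v1 - v2 and w1 - w2 the difference is
  (w1 - v1) + (v2 - w2); at least one summand is nonzero, and each nonzero summand
  is a difference of distinct vertices, hence lies in D1 resp. D2.  This gives
  membership in (D1 + D2) \<union> D1 \<union> D2.  For the Minkowski difference note that
  \<sigma>1 - \<sigma>2 = \<pi>(\<sigma>1 \<times> \<sigma>2), and \<sigma>1 \<times> \<sigma>2 is compact and convex, hence by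
  Krein--Milman the convex hull of its own vertices.
\<close>

lemma open_segment_pair_left:
  assumes "x \<in> open_segment a b"
  shows "(x, c) \<in> open_segment (a, c) (b, c)"
  using assms unfolding in_segment by (auto simp: algebra_simps)

lemma open_segment_pair_right:
  assumes "x \<in> open_segment a b"
  shows "(c, x) \<in> open_segment (c, a) (c, b)"
  using assms unfolding in_segment by (auto simp: algebra_simps)

lemma extreme_point_of_Times:
  assumes ext: "(v1, v2) extreme_point_of (S \<times> T)"
  shows "v1 extreme_point_of S" and "v2 extreme_point_of T"
proof -
  have mem: "v1 \<in> S" "v2 \<in> T"
    using ext by (auto simp: extreme_point_of_def)
  have no_seg: "(v1, v2) \<notin> open_segment p q" if "p \<in> S \<times> T" "q \<in> S \<times> T" for p q
    using ext that by (auto simp: extreme_point_of_def)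
  show "v1 extreme_point_of S"
    unfolding extreme_point_of_def
    using mem no_seg[of "(a, v2)" "(b, v2)" for a b] open_segment_pair_left[of v1 _ _ v2]
    by auto
  show "v2 extreme_point_of T"
    unfolding extreme_point_of_def
    using mem no_seg[of "(v1, a)" "(v1, b)" for a b] open_segment_pair_right[of v2 _ _ v1]
    by auto
qed

corollary vertices_Times_subset:
  "vertices (S \<times> T) \<subseteq> vertices S \<times> vertices T"
  unfolding vertices_def using extreme_point_of_Times by fast

lemma vertices_linear_image_convex_hull:
  assumes "linear f"
  shows "vertices (f ` (convex hull V)) \<subseteq> f ` V"
  unfolding convex_hull_linear_image[OF assms] vertices_def
  using extreme_points_of_convex_hull by blast

lemma linear_diff_pair: "linear (\<lambda>(x::'a::real_vector, y). x - y)"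
  by (rule linearI) (auto simp: algebra_simps)

lemma finite_minkowski_sum:
  assumes "finite A" "finite B"
  shows "finite (minkowski_sum A B)"
proof -
  have "minkowski_sum A B = (\<lambda>(a, b). a + b) ` (A \<times> B)"
    unfolding minkowski_sum_def by auto
  then show ?thesis using assms by simp
qed

lemma minkowski_diff_as_image:
  "minkowski_diff A B = (\<lambda>(x, y). x - y) ` (A \<times> B)"
  unfolding minkowski_diff_def by auto

lemma diff_of_vertex_differences:
  assumes r1: "sufficiently_rich D1 \<sigma>1" and r2: "sufficiently_rich D2 \<sigma>2"
    and v: "v1 \<in> vertices \<sigma>1" "v2 \<in> vertices \<sigma>2"
    and w: "w1 \<in> vertices \<sigma>1" "w2 \<in> vertices \<sigma>2"
    and ne: "v1 - v2 \<noteq> w1 - w2"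
  shows "(w1 - w2) - (v1 - v2) \<in> minkowski_sum D1 D2 \<union> D1 \<union> D2"
proof -
  have split: "(w1 - w2) - (v1 - v2) = (w1 - v1) + (v2 - w2)"
    by (simp add: algebra_simps)
  have d1: "w1 - v1 \<in> D1" if "v1 \<noteq> w1"
    using r1 v w that by (auto simp: sufficiently_rich_def)
  have d2: "v2 - w2 \<in> D2" if "v2 \<noteq> w2"
    using r2 v w that by (auto simp: sufficiently_rich_def)
  consider "v1 = w1" "v2 \<noteq> w2" | "v1 \<noteq> w1" "v2 = w2" | "v1 \<noteq> w1" "v2 \<noteq> w2"
    using ne by blast
  then show ?thesis
  proof cases
    case 1 then show ?thesis using split d2 by simp
  next
    case 2 then show ?thesis using split d1 by simp
  next
    case 3 then show ?thesis using split d1 d2 unfolding minkowski_sum_def by blast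
  qed
qed

lemma sufficiently_rich_diff_image:
  fixes \<sigma>1 \<sigma>2 :: "'a::real_vector set"
  assumes V: "V \<subseteq> vertices (\<sigma>1 \<times> \<sigma>2)"
    and r1: "sufficiently_rich D1 \<sigma>1" and r2: "sufficiently_rich D2 \<sigma>2"
  shows "sufficiently_rich (minkowski_sum D1 D2 \<union> D1 \<union> D2)
           ((\<lambda>(x, y). x - y) ` (convex hull V))"
  unfolding sufficiently_rich_def
proof (intro conjI ballI impI)
  show "finite (minkowski_sum D1 D2 \<union> D1 \<union> D2)"
    using r1 r2 finite_minkowski_sum by (auto simp: sufficiently_rich_def)
next
  let ?\<pi> = "\<lambda>(x::'a, y). x - y"
  have gen: "vertices (?\<pi> ` (convex hull V)) \<subseteq> ?\<pi> ` (vertices \<sigma>1 \<times> vertices \<sigma>2)"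
    using vertices_linear_image_convex_hull[OF linear_diff_pair, of V]
      V vertices_Times_subset by blast
  fix p q assume p: "p \<in> vertices (?\<pi> ` (convex hull V))"
    and q: "q \<in> vertices (?\<pi> ` (convex hull V))" and "p \<noteq> q"
  obtain v1 v2 where "v1 \<in> vertices \<sigma>1" "v2 \<in> vertices \<sigma>2" "p = v1 - v2"
    using p gen by auto
  moreover obtain w1 w2 where "w1 \<in> vertices \<sigma>1" "w2 \<in> vertices \<sigma>2" "q = w1 - w2"
    using q gen by auto
  ultimately show "q - p \<in> minkowski_sum D1 D2 \<union> D1 \<union> D2"
    using diff_of_vertex_differences[OF r1 r2] \<open>p \<noteq> q\<close> by blast
qed

theorem mainTheorem17:
  fixes \<sigma>1 \<sigma>2 :: "'a::euclidean_space set"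
    and \<sigma> :: "('a \<times> 'a) set"
    and D1 D2 :: "'a set"
  assumes "polytope \<sigma>1" and "polytope \<sigma>2"
    and "\<exists>V. V \<subseteq> vertices (\<sigma>1 \<times> \<sigma>2) \<and> \<sigma> = convex hull V"
    and "sufficiently_rich D1 \<sigma>1" and "sufficiently_rich D2 \<sigma>2"
  shows "sufficiently_rich (minkowski_sum D1 D2 \<union> D1 \<union> D2) ((\<lambda>(x, y). x - y) ` \<sigma>)
       \<and> sufficiently_rich (minkowski_sum D1 D2 \<union> D1 \<union> D2) (minkowski_diff \<sigma>1 \<sigma>2)"
proof
  show "sufficiently_rich (minkowski_sum D1 D2 \<union> D1 \<union> D2) ((\<lambda>(x, y). x - y) ` \<sigma>)"
    using assms(3) sufficiently_rich_diff_image[OF _ assms(4,5)] by blast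
next
  have "compact (\<sigma>1 \<times> \<sigma>2)" "convex (\<sigma>1 \<times> \<sigma>2)"
    using assms(1,2) by (auto intro: compact_Times convex_Times polytope_imp_compact polytope_imp_convex)
  then have "\<sigma>1 \<times> \<sigma>2 = convex hull (vertices (\<sigma>1 \<times> \<sigma>2))"
    unfolding vertices_def by (rule Krein_Milman_Minkowski)
  then show "sufficiently_rich (minkowski_sum D1 D2 \<union> D1 \<union> D2) (minkowski_diff \<sigma>1 \<sigma>2)"
    unfolding minkowski_diff_as_image
    using sufficiently_rich_diff_image[OF order_refl assms(4,5)] by metis
qed

end
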